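(* Suppose that $X\subseteq\mathbb{R}$ is a Bernstein set. Then \textsc{Bob} has a winning strategy in the game $\mathsf{BM}_\mathrm{fin}(X)$.
   Context: A set $X\subseteq\mathbb{R}$ is a Bernstein set if both $X$ and $\mathbb{R}\setminus X$ meet every uncountable closed subset of $\mathbb{R}$. $X$ carries the subspace topology. The game $\mathsf{BM}_\mathrm{fin}(X)$ is played by \textsc{Alice} and \textsc{Bob} as follows. \textsc{Alice} plays a non-empty open set $A_0$; \textsc{Bob} plays a finite collection $\mathcal{B}_0$ of non-empty open subsets of $A_0$. In inning $n+1$, for each $B \in \mathcal{B}_n$ \textsc{Alice} plays a non-empty open set $A_B \subseteq B$; let $\mathcal{A}_{n+1}=\{A_B : B\in\mathcal{B}_n\}$; then \textsc{Bob} plays a finite collection $\mathcal{B}_{n+1}$ of non-empty open subsets of $\bigcup\mathcal{A}_{n+1}$. Put $B_n=\bigcup\mathcal{B}_n$. \textsc{Bob} wins the play if $\bigcap_{n\in\omega}B_n\neq\emptyset$; otherwise \textsc{Alice} wins. *)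

theory Defs
  imports "HOL-Analysis.Analysis"
begin

definition bernstein_set :: "real set \<Rightarrow> bool" where
  "bernstein_set X \<longleftrightarrow>
     (\<forall>C::real set. closed C \<and> uncountable C \<longrightarrow> X \<inter> C \<noteq> {} \<and> (- X) \<inter> C \<noteq> {})"

definition nonempty_open_in :: "real set \<Rightarrow> real set \<Rightarrow> bool" where
  "nonempty_open_in X U \<longleftrightarrow> U \<noteq> {} \<and> openin (top_of_set X) U"

text \<open>A strategy for Bob: given Alice's first move A0 and the list of Alice's later
  moves (inning k+1 is a map B \<mapsto> A_B on Bob's previous collection), Bob produces
  his next finite collection.\<close>
type_synonym bob_strategy = "real set \<Rightarrow> (real set \<Rightarrow> real set) list \<Rightarrow> real set set"

definition bob_move :: "bob_strategy \<Rightarrow> real set \<Rightarrow> (nat \<Rightarrow> real set \<Rightarrow> real set) \<Rightarrow> nat \<Rightarrow> real set set" where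
  "bob_move \<sigma> A0 a n = \<sigma> A0 (map a [0..<n])"

definition alice_legal :: "real set \<Rightarrow> bob_strategy \<Rightarrow> real set \<Rightarrow> (nat \<Rightarrow> real set \<Rightarrow> real set) \<Rightarrow> nat \<Rightarrow> bool" where
  "alice_legal X \<sigma> A0 a k \<longleftrightarrow>
     (\<forall>B \<in> bob_move \<sigma> A0 a k. nonempty_open_in X (a k B) \<and> a k B \<subseteq> B)"

definition bob_legal :: "real set \<Rightarrow> bob_strategy \<Rightarrow> real set \<Rightarrow> (nat \<Rightarrow> real set \<Rightarrow> real set) \<Rightarrow> nat \<Rightarrow> bool" where
  "bob_legal X \<sigma> A0 a n \<longleftrightarrow>
     finite (bob_move \<sigma> A0 a n) \<and>
     (\<forall>B \<in> bob_move \<sigma> A0 a n. nonempty_open_in X B \<and>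
        B \<subseteq> (case n of 0 \<Rightarrow> A0
               | Suc k \<Rightarrow> \<Union>((a k) ` bob_move \<sigma> A0 a k)))"

definition bob_wins_BM_fin :: "real set \<Rightarrow> bool" where
  "bob_wins_BM_fin X \<longleftrightarrow>
     (\<exists>\<sigma>::bob_strategy. \<forall>A0 a. nonempty_open_in X A0 \<longrightarrow>
        (\<forall>n. (\<forall>k<n. alice_legal X \<sigma> A0 a k) \<longrightarrow> bob_legal X \<sigma> A0 a n) \<and>
        ((\<forall>k. alice_legal X \<sigma> A0 a k) \<longrightarrow> (\<Inter>n. \<Union>(bob_move \<sigma> A0 a n)) \<noteq> {}))"

end

theory Submission
  imports Defs
begin

text \<open>
  Bob plays a Cantor scheme: every open set offered by Alice is answered by two open pieces
  with disjoint closures whose closures, within \<open>X\<close>, stay inside Alice's set.  After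
  \<open>n\<close> innings Bob holds the \<open>2\<^sup>n\<close> pieces indexed by binary words of length \<open>n\<close>,
  and the closures of the pieces along the branches of the binary tree form an uncountable
  closed set.  A Bernstein set meets it, and a common point lies in a piece of every inning.
\<close>

lemma uncountable_UNIV_nat_bool: "uncountable (UNIV :: (nat \<Rightarrow> bool) set)"
proof
  assume "countable (UNIV :: (nat \<Rightarrow> bool) set)"
  then obtain f :: "nat \<Rightarrow> nat \<Rightarrow> bool" where "range f = UNIV"
    using range_from_nat_into by blast
  then obtain k where diagonal: "f k = (\<lambda>n. \<not> f n n)"
    by (metis UNIV_I imageE)
  from fun_cong[OF diagonal, of k] show False
    by simp
qed

lemma uncountable_Cantor_scheme:
  fixes T :: "bool list \<Rightarrow> 'a::heine_borel set"
  assumes nonempty: "\<And>s. T s \<noteq> {}"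
    and nested: "\<And>s b. T (s @ [b]) \<subseteq> T s"
    and bounded: "\<And>s b. bounded (T (s @ [b]))"
    and separated: "\<And>s. closure (T (s @ [True])) \<inter> closure (T (s @ [False])) = {}"
  shows "uncountable (\<Inter>n. \<Union>s\<in>{s. length s = n}. closure (T s))"
proof
  define branch where "branch f n = T (map f [0..<n])" for f :: "nat \<Rightarrow> bool" and n
  have branch_Suc: "branch f (Suc n) = T (map f [0..<n] @ [f n])" for f n
    by (simp add: branch_def)
  have branch_antimono: "branch f n \<subseteq> branch f m" if "m \<le> n" for f m n
    using lift_Suc_antimono_le[of "branch f", OF _ that] nested by (simp add: branch_Suc branch_def)
  have "\<exists>p. \<forall>n. p \<in> closure (branch f (Suc n))" for f
  proof -
    obtain p where "\<And>n. p \<in> closure (branch f (Suc n))"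
    proof (rule bounded_closed_nest[of "\<lambda>n. closure (branch f (Suc n))"])
      show "closure (branch f (Suc n)) \<subseteq> closure (branch f (Suc m))" if "m \<le> n" for m n
        using that by (intro closure_mono branch_antimono) simp
      show "closure (branch f (Suc n)) \<noteq> {}" for n
        using nonempty by (simp add: branch_def)
      show "bounded (closure (branch f (Suc 0)))"
        using bounded[of "[]" "f 0"] by (simp add: branch_Suc bounded_closure)
    qed auto
    then show ?thesis
      by blast
  qed
  then obtain p where p: "\<And>f n. p f \<in> closure (branch f (Suc n))"
    by metis
  have p_branch: "p f \<in> closure (branch f n)" for f n
    using p[of f n] closure_mono[OF branch_antimono[of n "Suc n" f]] by auto
  have "inj p"
  proof (rule injI, rule ccontr)
    fix f g :: "nat \<Rightarrow> bool"
    assume "p f = p g" "f \<noteq> g"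
    define m where "m = (LEAST m. f m \<noteq> g m)"
    define s where "s = map f [0..<m]"
    have "\<exists>m. f m \<noteq> g m"
      using \<open>f \<noteq> g\<close> by (auto simp: fun_eq_iff)
    then have "f m \<noteq> g m"
      unfolding m_def by (rule LeastI_ex)
    have "f k = g k" if "k < m" for k
      using not_less_Least[OF that[unfolded m_def]] by simp
    then have "map g [0..<m] = s"
      unfolding s_def by simp
    then have "p g \<in> closure (T (s @ [g m]))"
      using p[of g m] by (simp add: branch_Suc)
    moreover have "p f \<in> closure (T (s @ [f m]))"
      using p[of f m] by (simp add: branch_Suc s_def)
    ultimately show False
      using separated[of s] \<open>p f = p g\<close> \<open>f m \<noteq> g m\<close> by (cases "f m"; cases "g m") auto
  qed
  have range_p: "range p \<subseteq> (\<Inter>n. \<Union>s\<in>{s. length s = n}. closure (T s))"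
  proof (intro subsetI INT_I)
    fix n q assume "q \<in> range p"
    then obtain f where "q = p f"
      by blast
    then show "q \<in> (\<Union>s\<in>{s. length s = n}. closure (T s))"
      using p_branch[of f n] unfolding branch_def by (intro UN_I[of "map f [0..<n]"]) simp_all
  qed
  assume "countable (\<Inter>n. \<Union>s\<in>{s. length s = n}. closure (T s))"
  with range_p have "countable (range p)"
    by (rule countable_subset)
  then have "countable (UNIV :: (nat \<Rightarrow> bool) set)"
    using \<open>inj p\<close> by (rule countable_image_inj_on)
  with uncountable_UNIV_nat_bool show False
    by contradiction
qed

definition Cantor_split :: "'a::metric_space set \<Rightarrow> 'a set \<Rightarrow> (bool \<Rightarrow> 'a set) \<Rightarrow> bool" where
  "Cantor_split X A P \<longleftrightarrow>
     (\<forall>b. P b \<noteq> {} \<and> openin (top_of_set X) (P b) \<and> bounded (P b) \<and> closure (P b) \<inter> X \<subseteq> A) \<and>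
     closure (P True) \<inter> closure (P False) = {}"

lemma Cantor_splitD:
  assumes "Cantor_split X A P"
  shows "P b \<noteq> {}" and "openin (top_of_set X) (P b)" and "bounded (P b)"
    and "closure (P b) \<inter> X \<subseteq> A" and "closure (P True) \<inter> closure (P False) = {}"
  using assms unfolding Cantor_split_def by blast+

lemma Cantor_split_subset: "Cantor_split X A P \<Longrightarrow> P b \<subseteq> A"
  using Cantor_splitD(2,4) closure_subset openin_imp_subset by blast

lemma Cantor_split_exists:
  fixes X A :: "'a::{metric_space, perfect_space} set"
  assumes dense: "closure X = UNIV" and "A \<noteq> {}" and A_open: "openin (top_of_set X) A"
  shows "\<exists>P. Cantor_split X A P"
proof -
  obtain x where "x \<in> A"
    using \<open>A \<noteq> {}\<close> by blast
  then obtain e where "e > 0" and ball_in_A: "ball x e \<inter> X \<subseteq> A"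
    using A_open openin_contains_ball by metis
  obtain z where "z \<noteq> x" and "dist z x < e / 2"
    using perfect_choose_dist[of "e / 2" x] \<open>e > 0\<close> by auto
  define r where "r = dist x z / 3"
  define P where "P b = (if b then ball x r else ball z r) \<inter> X" for b
  have "r > 0"
    using \<open>z \<noteq> x\<close> by (simp add: r_def)
  have "x \<in> X"
    using \<open>x \<in> A\<close> A_open openin_imp_subset by blast
  have "ball z r \<inter> X \<noteq> {}"
    using open_Int_closure_eq_empty[of "ball z r" X] dense \<open>r > 0\<close> by auto
  have "x \<in> P True"
    using \<open>x \<in> X\<close> \<open>r > 0\<close> by (simp add: P_def)
  moreover have "P False \<noteq> {}"
    using \<open>ball z r \<inter> X \<noteq> {}\<close> by (simp add: P_def)
  ultimately have nonempty: "P b \<noteq> {}" for b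
    by (cases b) auto
  have closure_P: "closure (P b) \<subseteq> (if b then cball x r else cball z r)" for b
    by (rule closure_minimal) (auto simp: P_def)
  have "r < e"
    using \<open>dist z x < e / 2\<close> \<open>e > 0\<close> by (simp add: r_def dist_commute)
  then have "cball x r \<subseteq> ball x e"
    by auto
  moreover have "cball z r \<subseteq> ball x e"
  proof
    fix y assume "y \<in> cball z r"
    then have "dist x y \<le> dist x z + r"
      using dist_triangle[of x y z] by simp
    then show "y \<in> ball x e"
      using \<open>dist z x < e / 2\<close> \<open>e > 0\<close> by (simp add: r_def dist_commute)
  qed
  moreover have "cball x r \<inter> cball z r = {}"
  proof (rule ccontr)
    assume "cball x r \<inter> cball z r \<noteq> {}"
    then obtain y where "dist x y \<le> r" "dist z y \<le> r"
      by auto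
    then show False
      using dist_triangle[of x z y] dist_commute[of y z] \<open>r > 0\<close> unfolding r_def by linarith
  qed
  ultimately have "Cantor_split X A P"
    unfolding Cantor_split_def using nonempty closure_P[of True] closure_P[of False] ball_in_A
    by (auto simp: P_def openin_open_Int Int_commute[of _ X] bounded_Int)
  then show ?thesis
    by blast
qed

definition Cantor_halves :: "'a::metric_space set \<Rightarrow> 'a set \<Rightarrow> bool \<Rightarrow> 'a set" where
  "Cantor_halves X A = (SOME P. Cantor_split X A P)"

lemma Cantor_split_halves:
  fixes X A :: "'a::{metric_space, perfect_space} set"
  assumes "closure X = UNIV" and "A \<noteq> {}" and "openin (top_of_set X) A"
  shows "Cantor_split X A (Cantor_halves X A)"
  unfolding Cantor_halves_def using Cantor_split_exists[OF assms] by (rule someI_ex)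

lemma bernstein_set_dense:
  assumes "bernstein_set X"
  shows "closure X = UNIV"
proof -
  have "\<exists>y\<in>X. dist y x < e" if "e > 0" for x e
  proof -
    have "X \<inter> cball x (e / 2) \<noteq> {}"
      using assms \<open>e > 0\<close> uncountable_cball[of "e / 2" x] unfolding bernstein_set_def by auto
    then show ?thesis
      using \<open>e > 0\<close> by (force simp: dist_commute)
  qed
  then show ?thesis
    by (auto simp: closure_approachable)
qed

function halving_tree ::
    "'a::metric_space set \<Rightarrow> 'a set \<Rightarrow> (nat \<Rightarrow> 'a set \<Rightarrow> 'a set) \<Rightarrow> bool list \<Rightarrow> 'a set" where
  "halving_tree X A0 a [] = A0"
| "halving_tree X A0 a (s @ [b]) = Cantor_halves X (a (length s) (halving_tree X A0 a s)) b"
  by (metis prod_cases4 rev_exhaust) auto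
termination
  by (relation "Wellfounded.measure (\<lambda>(_, _, _, s). length s)") auto

lemma halving_tree_cong:
  "(\<And>k. k < length s \<Longrightarrow> a k = a' k) \<Longrightarrow> halving_tree X A0 a s = halving_tree X A0 a' s"
  by (induction s rule: rev_induct) auto

lemma finite_bool_lists_length: "finite {s :: bool list. length s = n}"
  using finite_lists_length_eq[of "UNIV :: bool set" n] by simp

definition halving_strategy :: "real set \<Rightarrow> bob_strategy" where
  "halving_strategy X A0 as = halving_tree X A0 (\<lambda>k. as ! k) ` {s. length s = length as}"

lemma bob_move_halving_strategy:
  "bob_move (halving_strategy X) A0 a n = halving_tree X A0 a ` {s. length s = n}"
  unfolding bob_move_def halving_strategy_def
  by (auto intro!: image_cong halving_tree_cong)

lemma halving_tree_split:
  assumes "closure X = UNIV" and "alice_legal X (halving_strategy X) A0 a (length s)"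
  shows "Cantor_split X (a (length s) (halving_tree X A0 a s)) (\<lambda>b. halving_tree X A0 a (s @ [b]))"
      (is "Cantor_split X ?A _")
    and "a (length s) (halving_tree X A0 a s) \<subseteq> halving_tree X A0 a s"
proof -
  have "halving_tree X A0 a s \<in> bob_move (halving_strategy X) A0 a (length s)"
    by (simp add: bob_move_halving_strategy)
  with assms(2) have "nonempty_open_in X ?A" and "?A \<subseteq> halving_tree X A0 a s"
    unfolding alice_legal_def by auto
  with Cantor_split_halves[OF assms(1)]
  show "Cantor_split X ?A (\<lambda>b. halving_tree X A0 a (s @ [b]))" and "?A \<subseteq> halving_tree X A0 a s"
    unfolding nonempty_open_in_def by simp_all
qed

lemma halving_tree_nonempty_open:
  assumes "closure X = UNIV" and "nonempty_open_in X A0"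
    and "\<forall>k<length s. alice_legal X (halving_strategy X) A0 a k"
  shows "nonempty_open_in X (halving_tree X A0 a s)"
proof (cases s rule: rev_exhaust)
  case Nil
  then show ?thesis
    using assms(2) by simp
next
  case (snoc s' b)
  then have "Cantor_split X (a (length s') (halving_tree X A0 a s')) (\<lambda>b. halving_tree X A0 a (s' @ [b]))"
    using assms(3) by (intro halving_tree_split(1)[OF assms(1)]) simp
  then show ?thesis
    unfolding snoc nonempty_open_in_def using Cantor_splitD(1,2) by blast
qed

lemma halving_strategy_legal:
  assumes "closure X = UNIV" and "nonempty_open_in X A0"
    and alice: "\<forall>k<n. alice_legal X (halving_strategy X) A0 a k"
  shows "bob_legal X (halving_strategy X) A0 a n"
  unfolding bob_legal_def bob_move_halving_strategy
proof (intro conjI ballI)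
  show "finite (halving_tree X A0 a ` {s. length s = n})"
    using finite_bool_lists_length by simp
next
  fix B assume "B \<in> halving_tree X A0 a ` {s. length s = n}"
  then obtain s where s: "length s = n" "B = halving_tree X A0 a s"
    by blast
  then show "nonempty_open_in X B"
    using halving_tree_nonempty_open[OF assms(1,2)] alice by simp
  show "B \<subseteq> (case n of 0 \<Rightarrow> A0 | Suc k \<Rightarrow> \<Union>(a k ` halving_tree X A0 a ` {s. length s = k}))"
  proof (cases s rule: rev_exhaust)
    case Nil
    then show ?thesis
      using s by simp
  next
    case (snoc s' b)
    then have "Cantor_split X (a (length s') (halving_tree X A0 a s')) (\<lambda>b. halving_tree X A0 a (s' @ [b]))"
      using s alice by (intro halving_tree_split(1)[OF assms(1)]) simp
    then have "B \<subseteq> a (length s') (halving_tree X A0 a s')"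
      using Cantor_split_subset[of X _ _ b] s snoc by simp
    moreover have "halving_tree X A0 a s' \<in> halving_tree X A0 a ` {s. length s = length s'}"
      by simp
    ultimately have "B \<subseteq> \<Union>(a (length s') ` halving_tree X A0 a ` {s. length s = length s'})"
      by blast
    moreover have "n = Suc (length s')"
      using s(1) snoc by simp
    ultimately show ?thesis
      by (simp add: image_image)
  qed
qed

lemma halving_strategy_wins:
  assumes "bernstein_set X" and "nonempty_open_in X A0"
    and alice: "\<forall>k. alice_legal X (halving_strategy X) A0 a k"
  shows "(\<Inter>n. \<Union>(bob_move (halving_strategy X) A0 a n)) \<noteq> {}"
proof -
  define T where "T = halving_tree X A0 a"
  have dense: "closure X = UNIV"
    using assms(1) by (rule bernstein_set_dense)
  have split: "Cantor_split X (a (length s) (T s)) (\<lambda>b. T (s @ [b]))"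
    and alice_inside: "a (length s) (T s) \<subseteq> T s" for s
    unfolding T_def by (rule halving_tree_split[OF dense alice[rule_format]])+
  define C where "C = (\<Inter>n. \<Union>s\<in>{s. length s = n}. closure (T s))"
  have "uncountable C"
    unfolding C_def
  proof (rule uncountable_Cantor_scheme)
    show "T s \<noteq> {}" for s
      using halving_tree_nonempty_open[OF dense assms(2)] alice
      unfolding T_def nonempty_open_in_def by blast
    show "T (s @ [b]) \<subseteq> T s" for s b
      using Cantor_split_subset[OF split] alice_inside by blast
    show "bounded (T (s @ [b]))" "closure (T (s @ [True])) \<inter> closure (T (s @ [False])) = {}" for s b
      using Cantor_splitD(3,5)[OF split] by blast+
  qed
  moreover have "closed C"
    unfolding C_def by (intro closed_INT closed_UN ballI closed_closure finite_bool_lists_length)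
  ultimately obtain y where "y \<in> X" "y \<in> C"
    using assms(1) unfolding bernstein_set_def by blast
  have "y \<in> \<Union>(bob_move (halving_strategy X) A0 a n)" for n
  proof -
    obtain s' where "length s' = Suc n" "y \<in> closure (T s')"
      using \<open>y \<in> C\<close> unfolding C_def by blast
    then obtain s b where "length s = n" "y \<in> closure (T (s @ [b]))"
      by (cases s' rule: rev_exhaust) auto
    then have "y \<in> T s"
      using Cantor_splitD(4)[OF split] alice_inside \<open>y \<in> X\<close> by blast
    then show ?thesis
      using \<open>length s = n\<close> unfolding T_def bob_move_halving_strategy by blast
  qed
  then show ?thesis
    by blast
qed

theorem proposition2p5:
  fixes X :: "real set"
  assumes "bernstein_set X"
  shows "bob_wins_BM_fin X"
  unfolding bob_wins_BM_fin_def
proof (intro exI allI impI conjI)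
  fix A0 a
  assume "nonempty_open_in X A0"
  then show "bob_legal X (halving_strategy X) A0 a n"
    if "\<forall>k<n. alice_legal X (halving_strategy X) A0 a k" for n
    using halving_strategy_legal[OF bernstein_set_dense[OF assms]] that by blast
  show "(\<Inter>n. \<Union>(bob_move (halving_strategy X) A0 a n)) \<noteq> {}"
    if "\<forall>k. alice_legal X (halving_strategy X) A0 a k"
    using halving_strategy_wins[OF assms \<open>nonempty_open_in X A0\<close> that] .
qed

end
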